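(* Let $n\ge 1$, $d\ge r\ge 1$, $\mathrm{St}(d,r)=\{x\in\mathbb{R}^{d\times r}:x^\top x=I_r\}$ with tangent spaces $\mathrm{T}_x\mathcal{M}=\{\xi: x^\top\xi+\xi^\top x=0\}$. Let $W\in\mathbb{R}^{n\times n}$ be a symmetric, nonnegative, doubly stochastic mixing matrix of a connected undirected graph (i.e. $W_{ij}>0$ only if $i=j$ or $\{i,j\}$ is an edge), with $\sigma_2\in(0,1)$ its second largest singular value. Let $\mathcal{R}$ be a retraction on $\mathrm{St}(d,r)$ and $M>0$ a constant such that for all $x,y\in\mathrm{St}(d,r)$ and $\xi\in\mathrm{T}_x\mathcal{M}$: $\|\mathcal{R}_x(\xi)-y\|_F\le\|x+\xi-y\|_F$ and $\|\mathcal{R}_x(\xi)-(x+\xi)\|_F\le M\|\xi\|_F^2$. Let $\delta_1,\delta_2>0$ satisfy $\delta_1\le\frac{1}{5\sqrt r}\delta_2$ and $\delta_2\le\frac16$. Let $t\ge\lceil\log_{\sigma_2}(\frac{1}{2\sqrt n})\rceil$ be an integer and $0<\alpha\le\min\{\frac{\Phi}{2L_t},1,\frac1M\}$, where $\Phi=2-\delta_2^2$. If $\mathbf{x}_k=(x_{1,k},\dots,x_{n,k})\in\mathcal{N}$ and, for all $i\in[n]$, $$x_{i,k+1}=\mathcal{R}_{x_{i,k}}\big(-\alpha\,\mathrm{grad}\,\varphi_i^t(\mathbf{x}_k)+\beta v_{i,k}\big)$$ with $\beta\ge 0$ and $v_{i,k}\in\mathrm{T}_{x_{i,k}}\mathcal{M}$,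 then, writing $\mathbf{v}_k=(v_{1,k},\dots,v_{n,k})$, $$\|\mathbf{x}_{k+1}-\bar{\mathbf{x}}_{k+1}\|_F\le\rho_t\|\mathbf{x}_k-\bar{\mathbf{x}}_k\|_F+\beta\|\mathbf{v}_k\|_F,$$ where $\rho_t=\sqrt{1-\gamma_t\alpha}$ with $\gamma_t=(1-4r\delta_1^2)(1-\frac{\delta_2^2}{2})\mu_t$ and $\mu_t=1-\lambda_2(W^t)$.
   Context: For $\mathbf{x}=(x_1,\dots,x_n)\in\mathrm{St}(d,r)^n$, $\|\mathbf{x}\|_F^2=\sum_i\|x_i\|_F^2$. The induced arithmetic mean (IAM) is $\bar x\in\arg\min_{y\in\mathrm{St}(d,r)}\sum_{i=1}^n\|y-x_i\|_F^2$, and $\bar{\mathbf{x}}=(\bar x,\dots,\bar x)$; $\bar{\mathbf{x}}_k,\bar{\mathbf{x}}_{k+1}$ denote these for $\mathbf{x}_k,\mathbf{x}_{k+1}$. The consensus function is $\varphi^t(\mathbf{x})=\frac14\sum_{i,j}W^t_{ij}\|x_i-x_j\|_F^2$ with $W^t_{ij}$ the entries of the matrix power $W^t$; $\mathrm{grad}\,\varphi^t_i(\mathbf{x})=\mathcal{P}_{\mathrm{T}_{x_i}\mathcal{M}}\big(x_i-\sum_j W^t_{ij}x_j\big)$ where $\mathcal{P}_{\mathrm{T}_x\mathcal{M}}(y)=y-\frac12x(x^\top y+y^\top x)$. $L_t=1-\lambda_n(W^t)$ and $\lambda_2(W^t)$, $\lambda_n(W^t)$ are the second largest and smallest eigenvalues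 of $W^t$. Neighborhoods: $\mathcal{N}_1=\{\mathbf{x}:\|\mathbf{x}-\bar{\mathbf{x}}\|_F^2\le n\delta_1^2\}$, $\mathcal{N}_2=\{\mathbf{x}:\max_i\|x_i-\bar x\|_F\le\delta_2\}$, $\mathcal{N}=\mathcal{N}_1\cap\mathcal{N}_2$. *)

theory Defs
  imports "HOL-Analysis.Analysis" "HOL-Computational_Algebra.Polynomial"
begin

text \<open>Matrices are HOL-Analysis matrices \<open>real^'c^'r\<close>; the Euclidean norm on this
  type is exactly the Frobenius norm.\<close>

definition stiefel :: "(real^'r^'d) set" where
  "stiefel = {x. transpose x ** x = mat 1}"

definition tangent :: "real^'r^'d \<Rightarrow> (real^'r^'d) set" where
  "tangent x = {\<xi>. transpose x ** \<xi> + transpose \<xi> ** x = 0}"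

definition proj_tangent :: "real^'r^'d \<Rightarrow> real^'r^'d \<Rightarrow> real^'r^'d" where
  "proj_tangent x y = y - (1/2) *\<^sub>R (x ** (transpose x ** y + transpose y ** x))"

primrec matpow :: "real^'n^'n \<Rightarrow> nat \<Rightarrow> real^'n^'n" where
  "matpow A 0 = mat 1"
| "matpow A (Suc k) = A ** matpow A k"

definition charpoly :: "real^'n^'n \<Rightarrow> real poly" where
  "charpoly A = det (\<chi> i j. (if i = j then [:0, 1:] else 0) - [:A $ i $ j:])"

definition eigs_desc :: "real^'n^'n \<Rightarrow> real list" where
  "eigs_desc A = rev (sorted_list_of_multiset (proots (charpoly A)))"

(* k-th largest eigenvalue, 1-indexed: lambda_1 >= lambda_2 >= ... >= lambda_n *)
definition eigval :: "real^'n^'n \<Rightarrow> nat \<Rightarrow> real" where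
  "eigval A k = eigs_desc A ! (k - 1)"

definition eigval_min :: "real^'n^'n \<Rightarrow> real" where
  "eigval_min A = eigval A CARD('n)"

definition singval :: "real^'n^'n \<Rightarrow> nat \<Rightarrow> real" where
  "singval A k = sqrt (eigval (transpose A ** A) k)"

definition tnorm :: "('n \<Rightarrow> real^'r^'d) \<Rightarrow> real" where
  "tnorm x = sqrt (\<Sum>i\<in>UNIV. (norm (x i))\<^sup>2)"

definition is_IAM :: "('n::finite \<Rightarrow> real^'r^'d) \<Rightarrow> real^'r^'d \<Rightarrow> bool" where
  "is_IAM x xb \<longleftrightarrow> xb \<in> stiefel \<and>
     (\<forall>y\<in>stiefel. (\<Sum>i\<in>UNIV. (norm (xb - x i))\<^sup>2) \<le> (\<Sum>i\<in>UNIV. (norm (y - x i))\<^sup>2))"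

(* Riemannian gradient of the i-th component of the consensus function phi^t *)
definition grad_phi :: "real^'n^'n \<Rightarrow> nat \<Rightarrow> ('n::finite \<Rightarrow> real^'r^'d) \<Rightarrow> 'n \<Rightarrow> real^'r^'d" where
  "grad_phi W t x i = proj_tangent (x i) (x i - (\<Sum>j\<in>UNIV. (matpow W t $ i $ j) *\<^sub>R x j))"

definition is_retraction :: "(real^'r^'d \<Rightarrow> real^'r^'d \<Rightarrow> real^'r^'d) \<Rightarrow> bool" where
  "is_retraction R \<longleftrightarrow>
     continuous_on {(x, \<xi>). x \<in> stiefel \<and> \<xi> \<in> tangent x} (\<lambda>(x, \<xi>). R x \<xi>) \<and>
     (\<forall>x\<in>stiefel. R x 0 = x \<and>
        (\<forall>\<xi>\<in>tangent x. R x \<xi> \<in> stiefel \<and>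
           ((\<lambda>s. R x (s *\<^sub>R \<xi>)) has_vector_derivative \<xi>) (at 0)))"

definition connected_graph :: "('n \<Rightarrow> 'n \<Rightarrow> bool) \<Rightarrow> bool" where
  "connected_graph E \<longleftrightarrow> (\<forall>i j. E i j \<longrightarrow> E j i) \<and> (\<forall>i. \<not> E i i) \<and>
     (\<forall>i j. (i, j) \<in> {(a, b). E a b}\<^sup>*)"

definition mixing_matrix :: "('n::finite \<Rightarrow> 'n \<Rightarrow> bool) \<Rightarrow> real^'n^'n \<Rightarrow> bool" where
  "mixing_matrix E W \<longleftrightarrow> transpose W = W \<and> (\<forall>i j. W $ i $ j \<ge> 0) \<and>
     (\<forall>i. (\<Sum>j\<in>UNIV. W $ i $ j) = 1) \<and> (\<forall>j. (\<Sum>i\<in>UNIV. W $ i $ j) = 1) \<and>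
     (\<forall>i j. W $ i $ j > 0 \<longrightarrow> i = j \<or> E i j)"

end

theory Submission
  imports Defs
begin

(* Write z_i = x_i - xbar and g_i = grad phi^t_i(x). The IAM xbar_{k+1} is at least as close to
   x_{k+1} as xbar_k is, and the retraction does not increase distances to points of St(d,r), so
   after the triangle inequality for the beta v_k term it suffices to show
   sum |z_i - alpha g_i|^2 <= rho_t^2 sum |z_i|^2. Expanding the square, this follows from
   (1) sum <z_i, g_i> >= (1 - delta2^2/2) 2 phi^t, because the projection onto T_{x_i} removes only a
       normal component x_i S, which the identity x^T(x - y) + (x - y)^T x = (x - y)^T (x - y) on
       St(d,r) makes quadratically small;
   (2) sum |g_i|^2 <= L_t 2 phi^t and 2 phi^t >= mu_t sum |z_i - mean z|^2, spectral bounds for the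
       symmetric stochastic matrix W^t;
   (3) |sum z_i| <= (1/2) sum |z_i|^2 by the first-order condition of the IAM, so centering costs
       only the factor 1 - delta1^2/4 >= 1 - 4 r delta1^2.
   Eigenvalues are defined through the roots of the characteristic polynomial, so the spectral
   theorem is proved first (maximising the Rayleigh quotient) and used to factor charpoly. *)

section \<open>Spectral theorem for real symmetric matrices\<close>

lemma symmetric_matrix_inner_commute:
  fixes A :: "real^'n^'n"
  assumes "transpose A = A"
  shows "u \<bullet> (A *v w) = w \<bullet> (A *v u)"
  by (metis assms dot_lmul_matrix inner_commute transpose_matrix_vector)

lemma linear_coeff_zero_if_quadratic_nonneg:
  fixes a b :: real
  assumes nonneg: "\<And>s. 0 \<le> 2 * s * a + s\<^sup>2 * b"
  shows "a = 0"
proof (rule ccontr)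
  assume "a \<noteq> 0"
  define s where "s = - a / (\<bar>b\<bar> + 1)"
  have "2 * s * a + s\<^sup>2 * b \<le> s * (2 * a + s * \<bar>b\<bar>)"
    using mult_left_mono[OF abs_ge_self[of b] zero_le_square[of s]]
    by (simp add: power2_eq_square algebra_simps)
  also have "\<dots> = - (a\<^sup>2 * (\<bar>b\<bar> + 2) / (\<bar>b\<bar> + 1)\<^sup>2)"
    unfolding s_def by (simp add: field_simps power2_eq_square)
  also have "\<dots> < 0"
    using \<open>a \<noteq> 0\<close> by (simp add: divide_neg_pos mult_neg_pos)
  finally show False using nonneg[of s] by linarith
qed

lemma symmetric_matrix_rayleigh_max_eigenvector:
  fixes A :: "real^'n^'n"
  assumes sym: "transpose A = A" and S: "subspace S" and inv: "\<And>y. y \<in> S \<Longrightarrow> A *v y \<in> S"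
    and u: "u \<in> S" and bound: "\<And>y. y \<in> S \<Longrightarrow> y \<bullet> (A *v y) \<le> l * (norm y)\<^sup>2"
    and attained: "u \<bullet> (A *v u) = l * (norm u)\<^sup>2"
  shows "A *v u = l *\<^sub>R u"
proof -
  define gap where "gap y = l * (norm y)\<^sup>2 - y \<bullet> (A *v y)" for y
  define w where "w = l *\<^sub>R u - A *v u"
  have w: "w \<in> S"
    unfolding w_def using u inv by (intro subspace_diff[OF S] subspace_scale[OF S]) auto
  have "0 \<le> 2 * s * (w \<bullet> w) + s\<^sup>2 * gap w" for s
  proof -
    have "u + s *\<^sub>R w \<in> S" using u w by (intro subspace_add[OF S] subspace_scale[OF S])
    then have "0 \<le> gap (u + s *\<^sub>R w)" using bound unfolding gap_def by simp
    also have "gap (u + s *\<^sub>R w) = gap u + 2 * s * (w \<bullet> (l *\<^sub>R u - A *v u)) + s\<^sup>2 * gap w"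
      using symmetric_matrix_inner_commute[OF sym, of u w]
      unfolding gap_def power2_norm_eq_inner
      by (simp add: inner_add_left inner_commute[of u w] power2_eq_square algebra_simps)
    finally show ?thesis using attained by (simp add: gap_def w_def)
  qed
  then have "w \<bullet> w = 0" by (rule linear_coeff_zero_if_quadratic_nonneg)
  then show ?thesis by (simp add: w_def)
qed

lemma symmetric_matrix_eigenvector_in_invariant_subspace:
  fixes A :: "real^'n^'n"
  assumes sym: "transpose A = A" and S: "subspace S" "S \<noteq> {0}"
    and inv: "\<And>y. y \<in> S \<Longrightarrow> A *v y \<in> S"
  shows "\<exists>u\<in>S. norm u = 1 \<and> (\<exists>l. A *v u = l *\<^sub>R u)"
proof -
  define K where "K = S \<inter> sphere 0 1"
  have "compact K"
    unfolding K_def using closed_subspace[OF S(1)] compact_sphere by blast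
  moreover obtain y where "y \<in> S" "y \<noteq> 0" using S subspace_0 by blast
  then have "(1 / norm y) *\<^sub>R y \<in> K" unfolding K_def using subspace_scale[OF S(1)] by auto
  moreover have "continuous_on K (\<lambda>y. y \<bullet> (A *v y))"
    by (intro continuous_intros linear_continuous_on matrix_vector_mul_bounded_linear)
  ultimately obtain u where u: "u \<in> K" and max: "\<And>y. y \<in> K \<Longrightarrow> y \<bullet> (A *v y) \<le> u \<bullet> (A *v u)"
    using continuous_attains_sup[of K] by blast
  define l where "l = u \<bullet> (A *v u)"
  have bound: "y \<bullet> (A *v y) \<le> l * (norm y)\<^sup>2" if "y \<in> S" for y
  proof (cases "y = 0")
    case False
    then have "(1 / norm y) *\<^sub>R y \<in> K" unfolding K_def using that subspace_scale[OF S(1)] by auto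
    then have "(y \<bullet> (A *v y)) / (norm y)\<^sup>2 \<le> l"
      using max unfolding l_def by (fastforce simp: matrix_vector_mult_scaleR power2_eq_square)
    then show ?thesis using False by (simp add: divide_le_eq)
  qed simp
  have "u \<in> S" "norm u = 1" using u by (auto simp: K_def)
  moreover have "A *v u = l *\<^sub>R u"
    using \<open>u \<in> S\<close> \<open>norm u = 1\<close> bound
    by (intro symmetric_matrix_rayleigh_max_eigenvector[OF sym S(1) inv]) (auto simp: l_def)
  ultimately show ?thesis by blast
qed

lemma symmetric_matrix_extend_orthogonal_eigenvectors:
  fixes A :: "real^'n^'n"
  assumes sym: "transpose A = A" and U: "finite U" "card U < CARD('n)"
    and eig: "\<forall>u\<in>U. \<exists>l. A *v u = l *\<^sub>R u"
  obtains e where "norm e = 1" "\<exists>l. A *v e = l *\<^sub>R e" "\<forall>u\<in>U. orthogonal u e"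
proof -
  define S where "S = {y. \<forall>u\<in>U. orthogonal u y}"
  have "dim U < DIM(real^'n)"
    using dim_le_card[of U U] U by (simp add: span_superset)
  then obtain y where "y \<noteq> 0" "\<And>z. z \<in> span U \<Longrightarrow> orthogonal y z"
    using orthogonal_to_subspace_exists by metis
  then have "y \<in> S" unfolding S_def using span_base orthogonal_commute by blast
  have "A *v y \<in> S" if "y \<in> S" for y
    unfolding S_def mem_Collect_eq
  proof
    fix u assume "u \<in> U"
    then obtain l where "A *v u = l *\<^sub>R u" using eig by blast
    then have "u \<bullet> (A *v y) = l * (y \<bullet> u)"
      using symmetric_matrix_inner_commute[OF sym, of u y] by simp
    then show "orthogonal u (A *v y)"
      using that \<open>u \<in> U\<close> by (simp add: S_def orthogonal_def inner_commute)
  qed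
  then show thesis
    using symmetric_matrix_eigenvector_in_invariant_subspace[OF sym, of S] that
      \<open>y \<in> S\<close> \<open>y \<noteq> 0\<close> subspace_orthogonal_to_vectors[of U] S_def by blast
qed

lemma symmetric_matrix_orthonormal_eigenbasis:
  fixes A :: "real^'n^'n"
  assumes sym: "transpose A = A" and e0: "norm e0 = 1" "A *v e0 = l0 *\<^sub>R e0"
  shows "\<exists>U. finite U \<and> e0 \<in> U \<and> card U = CARD('n) \<and> pairwise orthogonal U \<and>
     (\<forall>u\<in>U. norm u = 1 \<and> (\<exists>l. A *v u = l *\<^sub>R u))"
proof -
  have "\<exists>U. finite U \<and> e0 \<in> U \<and> card U = Suc k \<and> pairwise orthogonal U \<and>
     (\<forall>u\<in>U. norm u = 1 \<and> (\<exists>l. A *v u = l *\<^sub>R u))" if "Suc k \<le> CARD('n)" for k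
    using that
  proof (induction k)
    case 0
    show ?case using e0 by (intro exI[of _ "{e0}"]) (auto simp: pairwise_def)
  next
    case (Suc k)
    then obtain U where U: "finite U" "e0 \<in> U" "card U = Suc k" "pairwise orthogonal U"
        "\<forall>u\<in>U. norm u = 1 \<and> (\<exists>l. A *v u = l *\<^sub>R u)"
      by auto
    obtain e where e: "norm e = 1" "\<exists>l. A *v e = l *\<^sub>R e" "\<forall>u\<in>U. orthogonal u e"
      using symmetric_matrix_extend_orthogonal_eigenvectors[OF sym U(1)] U(3,5) Suc.prems by auto
    then have "e \<notin> U" by (auto simp: orthogonal_def)
    then show ?case
      using U e by (intro exI[of _ "insert e U"]) (auto simp: pairwise_insert orthogonal_commute)
  qed
  then show ?thesis
    by (metis Suc_pred' zero_less_card_finite order_refl)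
qed

lemma orthogonal_matrix_sum_products:
  fixes Q :: "real^'n^'n"
  assumes "orthogonal_matrix Q"
  shows "(\<Sum>k\<in>UNIV. Q$i$k * Q$j$k) = (if i = j then 1 else 0)"
    and "(\<Sum>i\<in>UNIV. Q$i$k * Q$i$m) = (if k = m then 1 else 0)"
  using assms unfolding orthogonal_matrix_def
  by (simp_all add: vec_eq_iff matrix_matrix_mult_def transpose_def mat_def)

lemma symmetric_matrix_spectral_decomposition:
  fixes A :: "real^'n^'n"
  assumes sym: "transpose A = A" and e0: "norm e0 = 1" "A *v e0 = l0 *\<^sub>R e0"
  obtains Q :: "real^'n^'n" and l k0 where "orthogonal_matrix Q"
    "\<And>i j. A$i$j = (\<Sum>k\<in>UNIV. Q$i$k * l k * Q$j$k)" "column k0 Q = e0" "l k0 = l0"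
proof -
  obtain U where U: "finite U" "e0 \<in> U" "card U = CARD('n)" "pairwise orthogonal U"
     "\<forall>u\<in>U. norm u = 1 \<and> (\<exists>l. A *v u = l *\<^sub>R u)"
    using symmetric_matrix_orthonormal_eigenbasis[OF sym e0] by blast
  obtain f where f: "bij_betw f (UNIV::'n set) U"
    using finite_same_card_bij[of "UNIV::'n set" U] U(1,3) by auto
  then have fU: "f k \<in> U" for k by (auto simp: bij_betw_def)
  define l where "l k = (SOME c. A *v f k = c *\<^sub>R f k)" for k
  have eig: "A *v f k = l k *\<^sub>R f k" for k
    unfolding l_def using U(5) fU[of k] by (metis (mono_tags, lifting) someI_ex)
  obtain k0 where k0: "f k0 = e0" using f U(2) by (metis bij_betw_inv_into_right)
  define Q where "Q = (\<chi> i k. f k $ i)"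
  have column: "column k Q = f k" for k by (simp add: Q_def column_def vec_eq_iff)
  have orth: "orthogonal_matrix Q"
    unfolding orthogonal_matrix_orthonormal_columns column
    using U(4,5) fU f by (auto simp: pairwise_def bij_betw_def inj_on_def) blast
  have "A$i$j = (\<Sum>k\<in>UNIV. Q$i$k * l k * Q$j$k)" for i j
  proof -
    have AQ: "(A ** Q)$i$k = l k * Q$i$k" for i k
      using eig[of k] by (simp add: Q_def matrix_matrix_mult_def matrix_vector_mult_def vec_eq_iff)
    have "A = (A ** Q) ** transpose Q"
      using orth by (metis matrix_mul_assoc matrix_mul_rid orthogonal_matrix_def)
    then have "A$i$j = ((A ** Q) ** transpose Q)$i$j" by simp
    then show ?thesis
      by (simp only: matrix_matrix_mult_def[of "A ** Q"] transpose_def vec_lambda_beta AQ)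
        (simp add: mult_ac)
  qed
  moreover have "l k0 = l0"
    using eig[of k0] e0 k0 by (metis norm_zero scaleR_cancel_right zero_neq_one)
  ultimately show thesis using that orth column k0 by blast
qed

lemma charpoly_spectral_decomposition:
  fixes A Q :: "real^'n^'n" and l :: "'n \<Rightarrow> real"
  assumes orth: "orthogonal_matrix Q" and dec: "\<And>i j. A$i$j = (\<Sum>k\<in>UNIV. Q$i$k * l k * Q$j$k)"
  shows "charpoly A = (\<Prod>k\<in>UNIV. [:- l k, 1:])"
proof -
  define P :: "real poly^'n^'n" where "P = (\<chi> i j. [:Q$i$j:])"
  define D :: "real poly^'n^'n" where "D = (\<chi> i j. if i = j then [:- l i, 1:] else 0)"
  have "(P ** transpose P)$i$j = [:\<Sum>k\<in>UNIV. Q$i$k * Q$j$k:]" for i j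
    by (simp add: matrix_matrix_mult_def transpose_def P_def sum_to_poly mult.commute)
  then have PP: "P ** transpose P = mat 1"
    by (simp add: vec_eq_iff orthogonal_matrix_sum_products(1)[OF orth] mat_def)
  have PD: "(P ** D)$i$k = [:Q$i$k:] * [:- l k, 1:]" for i k
  proof -
    have "(P ** D)$i$k = (\<Sum>m\<in>UNIV. if m = k then [:Q$i$k:] * [:- l k, 1:] else 0)"
      unfolding matrix_matrix_mult_def P_def D_def
      by (simp only: vec_lambda_beta) (rule sum.cong, auto simp del: mult_pCons_left)
    then show ?thesis by simp
  qed
  have "(P ** D ** transpose P)$i$j = (\<chi> i j. (if i = j then [:0, 1:] else 0) - [:A $ i $ j:]) $ i $ j"
    for i j
  proof -
    have "(P ** D ** transpose P)$i$j = (\<Sum>k\<in>UNIV. [:Q$i$k:] * [:- l k, 1:] * [:Q$j$k:])"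
      unfolding matrix_matrix_mult_def[of "P ** D"] transpose_def
      by (simp only: vec_lambda_beta PD) (simp add: P_def del: mult_pCons_left)
    also have "\<dots> = (\<Sum>k\<in>UNIV. [:Q$i$k * Q$j$k:] * [:0, 1:] - [:Q$i$k * l k * Q$j$k:])"
      by (intro sum.cong refl) (simp add: algebra_simps del: mult_pCons_left)
    also have "\<dots> = (\<chi> i j. (if i = j then [:0, 1:] else 0) - [:A $ i $ j:]) $ i $ j"
      by (simp only: sum_subtractf sum_distrib_right[symmetric] sum_to_poly
          orthogonal_matrix_sum_products(1)[OF orth] dec[symmetric]) simp
    finally show ?thesis .
  qed
  then have "P ** D ** transpose P = (\<chi> i j. (if i = j then [:0, 1:] else 0) - [:A $ i $ j:])"
    by (simp only: vec_eq_iff) blast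
  then have "charpoly A = det (P ** D ** transpose P)"
    unfolding charpoly_def by simp
  also have "\<dots> = det D * det (P ** transpose P)"
    by (simp add: det_mul)
  also have "\<dots> = (\<Prod>k\<in>UNIV. [:- l k, 1:])"
    unfolding PP by (subst det_diagonal) (auto simp: D_def)
  finally show ?thesis .
qed

lemma proots_charpoly_spectral_decomposition:
  fixes A :: "real^'n^'n" and l :: "'n \<Rightarrow> real"
  assumes "charpoly A = (\<Prod>k\<in>UNIV. [:- l k, 1:])"
  shows "proots (charpoly A) = image_mset l (mset_set UNIV)"
proof -
  have "(\<Sum>k\<in>K. {#l k#}) = image_mset l (mset_set K)" if "finite K" for K :: "'n set"
    using that by (induction K rule: finite_induct) auto
  then show ?thesis unfolding assms by (subst proots_prod) auto
qed

lemma sorted_list_of_multiset_first_le: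
  fixes M :: "'a::linorder multiset"
  assumes "x \<in># M"
  shows "sorted_list_of_multiset M ! 0 \<le> x"
proof -
  let ?s = "sorted_list_of_multiset M"
  obtain j where "j < length ?s" "?s ! j = x"
    using assms by (metis in_set_conv_nth mset_sorted_list_of_multiset set_mset_mset)
  then show ?thesis using sorted_nth_mono[of ?s 0 j] by simp
qed

lemma sorted_list_of_multiset_last_ge:
  fixes M :: "'a::linorder multiset"
  assumes "x \<in># M"
  shows "x \<le> rev (sorted_list_of_multiset M) ! 0"
proof -
  let ?s = "sorted_list_of_multiset M"
  obtain j where j: "j < length ?s" "?s ! j = x"
    using assms by (metis in_set_conv_nth mset_sorted_list_of_multiset set_mset_mset)
  then have "rev ?s ! 0 = ?s ! (length ?s - 1)" by (simp add: rev_nth del: length_greater_0_conv)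
  then show ?thesis using sorted_nth_mono[of ?s j "length ?s - 1"] j by simp
qed

lemma rev_sorted_list_of_multiset_second_ge:
  fixes M :: "'a::linorder multiset"
  assumes max: "\<forall>z\<in>#M. z \<le> a" and "a \<in># M" and "b \<in># M - {#a#}"
  shows "b \<le> rev (sorted_list_of_multiset M) ! 1"
proof -
  let ?s = "sorted_list_of_multiset (M - {#a#})"
  have "sorted_list_of_multiset M = sorted_list_of_multiset (add_mset a (M - {#a#}))"
    using \<open>a \<in># M\<close> by simp
  also have "\<dots> = ?s @ [a]"
    using max by (simp, intro sorted_insort_is_snoc) (auto dest: in_diffD)
  finally have "rev (sorted_list_of_multiset M) ! 1 = rev ?s ! 0" by simp
  then show ?thesis using sorted_list_of_multiset_last_ge[OF \<open>b \<in># M - {#a#}\<close>] by simp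
qed

lemma eigval_min_le_spectral:
  fixes A :: "real^'n^'n" and l :: "'n \<Rightarrow> real"
  assumes "charpoly A = (\<Prod>k\<in>UNIV. [:- l k, 1:])"
  shows "eigval_min A \<le> l k"
proof -
  have roots: "proots (charpoly A) = image_mset l (mset_set UNIV)"
    by (rule proots_charpoly_spectral_decomposition[OF assms])
  let ?s = "sorted_list_of_multiset (proots (charpoly A))"
  have "length ?s = size (mset ?s)" by (rule size_mset[symmetric])
  also have "\<dots> = CARD('n)" by (simp add: roots)
  finally have "eigval_min A = ?s ! 0"
    unfolding eigval_min_def eigval_def eigs_desc_def by (simp add: rev_nth)
  moreover have "l k \<in># proots (charpoly A)" by (simp add: roots)
  ultimately show ?thesis using sorted_list_of_multiset_first_le by metis
qed

lemma eigval_2_ge_spectral: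
  fixes A :: "real^'n^'n" and l :: "'n \<Rightarrow> real"
  assumes "charpoly A = (\<Prod>k\<in>UNIV. [:- l k, 1:])" and max: "\<And>m. l m \<le> l k0" and "k \<noteq> k0"
  shows "l k \<le> eigval A 2"
proof -
  have roots: "proots (charpoly A) = image_mset l (mset_set UNIV)"
    by (rule proots_charpoly_spectral_decomposition[OF assms(1)])
  have "image_mset l (mset_set UNIV) - {#l k0#} = image_mset l (mset_set (UNIV - {k0}))"
    by (simp add: mset_set_Diff image_mset_Diff)
  then have "l k \<in># image_mset l (mset_set UNIV) - {#l k0#}"
    using \<open>k \<noteq> k0\<close> by simp
  then have "l k \<le> rev (sorted_list_of_multiset (proots (charpoly A))) ! 1"
    unfolding roots using max by (intro rev_sorted_list_of_multiset_second_ge) auto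
  then show ?thesis by (simp add: eigval_def eigs_desc_def)
qed

section \<open>Symmetric stochastic matrices and the consensus function\<close>

definition symmetric_stochastic :: "real^'n^'n \<Rightarrow> bool" where
  "symmetric_stochastic A \<longleftrightarrow>
     transpose A = A \<and> (\<forall>i j. 0 \<le> A$i$j) \<and> (\<forall>i. (\<Sum>j\<in>UNIV. A$i$j) = 1)"

definition mix :: "real^'n^'n \<Rightarrow> ('n \<Rightarrow> 'v::real_vector) \<Rightarrow> 'n \<Rightarrow> 'v" where
  "mix A u i = (\<Sum>j\<in>UNIV. A$i$j *\<^sub>R u j)"

(* consensus (matpow W t) is the consensus function phi^t of the paper. *)
definition consensus :: "real^'n^'n \<Rightarrow> ('n \<Rightarrow> 'v::real_inner) \<Rightarrow> real" where
  "consensus A u = (1/4) * (\<Sum>i\<in>UNIV. \<Sum>j\<in>UNIV. A$i$j * (norm (u i - u j))\<^sup>2)"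

lemma symmetric_stochastic_column_sum:
  assumes "symmetric_stochastic A"
  shows "(\<Sum>i\<in>UNIV. A$i$j) = 1"
proof -
  have "A$i$j = A$j$i" for i
    using assms unfolding symmetric_stochastic_def by (metis transpose_def vec_lambda_beta)
  then show ?thesis using assms by (simp add: symmetric_stochastic_def)
qed

lemma symmetric_stochastic_matpow:
  assumes "symmetric_stochastic A"
  shows "symmetric_stochastic (matpow A k)"
proof (induction k)
  case 0
  show ?case by (simp add: symmetric_stochastic_def, simp add: mat_def)
next
  case (Suc k)
  have comm: "A ** matpow A k = matpow A k ** A"
    by (induction k) (simp_all add: matrix_mul_assoc)
  have "transpose (matpow A (Suc k)) = matpow A (Suc k)"
    using assms Suc by (simp add: symmetric_stochastic_def matrix_transpose_mul comm)
  moreover have "0 \<le> matpow A (Suc k) $ i $ j" for i j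
    using assms Suc by (simp add: symmetric_stochastic_def matrix_matrix_mult_def sum_nonneg)
  moreover have "(\<Sum>j\<in>UNIV. matpow A (Suc k) $ i $ j) = 1" for i
  proof -
    have "(\<Sum>j\<in>UNIV. matpow A (Suc k) $ i $ j) = (\<Sum>m\<in>UNIV. A$i$m * (\<Sum>j\<in>UNIV. matpow A k $ m $ j))"
      by (simp add: matrix_matrix_mult_def sum_distrib_left) (rule sum.swap)
    then show ?thesis using assms Suc by (simp add: symmetric_stochastic_def)
  qed
  ultimately show ?case by (simp add: symmetric_stochastic_def)
qed

lemma mixing_matrix_imp_symmetric_stochastic: "mixing_matrix E W \<Longrightarrow> symmetric_stochastic W"
  by (simp add: mixing_matrix_def symmetric_stochastic_def)

lemma mix_const: "symmetric_stochastic A \<Longrightarrow> mix A (\<lambda>_. c) i = c"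
  by (simp add: mix_def symmetric_stochastic_def flip: scaleR_sum_left)

lemma mix_diff: "mix A (\<lambda>j. u j - v j) i = mix A u i - mix A v i"
  by (simp add: mix_def scaleR_diff_right sum_subtractf)

lemma grad_phi_eq_mix: "grad_phi W t x i = proj_tangent (x i) (x i - mix (matpow W t) x i)"
  by (simp add: grad_phi_def mix_def)

lemma consensus_translate: "consensus A (\<lambda>i. u i - c) = consensus A u"
  by (simp add: consensus_def)

lemma consensus_nonneg: "symmetric_stochastic A \<Longrightarrow> 0 \<le> consensus A u"
  by (simp add: consensus_def symmetric_stochastic_def sum_nonneg)

lemma consensus_eq_inner:
  fixes u :: "'n::finite \<Rightarrow> 'v::real_inner"
  assumes A: "symmetric_stochastic A"
  shows "2 * consensus A u = (\<Sum>i\<in>UNIV. u i \<bullet> (u i - mix A u i))"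
proof -
  have rows: "\<And>i. (\<Sum>j\<in>UNIV. A$i$j) = 1" using A by (simp add: symmetric_stochastic_def)
  have "(\<Sum>i\<in>UNIV. \<Sum>j\<in>UNIV. A$i$j * (norm (u i - u j))\<^sup>2)
      = (\<Sum>i\<in>UNIV. \<Sum>j\<in>UNIV. A$i$j * (u i \<bullet> u i)) - 2 * (\<Sum>i\<in>UNIV. \<Sum>j\<in>UNIV. A$i$j * (u i \<bullet> u j))
        + (\<Sum>i\<in>UNIV. \<Sum>j\<in>UNIV. A$i$j * (u j \<bullet> u j))"
    by (simp add: power2_norm_eq_inner inner_diff_left inner_diff_right inner_commute
        algebra_simps sum.distrib sum_subtractf sum_distrib_left)
  also have "(\<Sum>i\<in>UNIV. \<Sum>j\<in>UNIV. A$i$j * (u i \<bullet> u i)) = (\<Sum>i\<in>UNIV. u i \<bullet> u i)"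
    by (simp add: rows flip: sum_distrib_right)
  also have "(\<Sum>i\<in>UNIV. \<Sum>j\<in>UNIV. A$i$j * (u j \<bullet> u j)) = (\<Sum>i\<in>UNIV. u i \<bullet> u i)"
    by (subst sum.swap) (simp add: symmetric_stochastic_column_sum[OF A] flip: sum_distrib_right)
  also have "(\<Sum>i\<in>UNIV. \<Sum>j\<in>UNIV. A$i$j * (u i \<bullet> u j)) = (\<Sum>i\<in>UNIV. u i \<bullet> mix A u i)"
    by (simp add: mix_def inner_sum_right)
  finally show ?thesis
    by (simp add: consensus_def inner_diff_right sum_subtractf)
qed

lemma orthogonal_matrix_inner_sum:
  fixes Q :: "real^'n^'n" and d e :: "'n \<Rightarrow> 'v::real_inner"
  assumes "orthogonal_matrix Q"
  shows "(\<Sum>i\<in>UNIV. (\<Sum>k\<in>UNIV. Q$i$k *\<^sub>R d k) \<bullet> (\<Sum>m\<in>UNIV. Q$i$m *\<^sub>R e m)) = (\<Sum>k\<in>UNIV. d k \<bullet> e k)"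
proof -
  have "(\<Sum>i\<in>UNIV. (\<Sum>k\<in>UNIV. Q$i$k *\<^sub>R d k) \<bullet> (\<Sum>m\<in>UNIV. Q$i$m *\<^sub>R e m))
      = (\<Sum>i\<in>UNIV. \<Sum>m\<in>UNIV. \<Sum>k\<in>UNIV. Q$i$k * Q$i$m * (d k \<bullet> e m))"
    by (simp add: inner_sum_left inner_sum_right sum_distrib_left mult_ac)
  also have "\<dots> = (\<Sum>m\<in>UNIV. \<Sum>k\<in>UNIV. \<Sum>i\<in>UNIV. Q$i$k * Q$i$m * (d k \<bullet> e m))"
    by (subst sum.swap) (rule sum.cong[OF refl], rule sum.swap)
  also have "\<dots> = (\<Sum>m\<in>UNIV. \<Sum>k\<in>UNIV. (if k = m then 1 else 0) * (d k \<bullet> e m))"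
    by (simp add: orthogonal_matrix_sum_products(2)[OF assms] flip: sum_distrib_right)
  finally show ?thesis by (simp add: if_distrib[of "\<lambda>c. c * _"] cong: if_cong)
qed

lemma orthogonal_matrix_expansion:
  fixes Q :: "real^'n^'n" and u :: "'n \<Rightarrow> 'v::real_vector"
  assumes "orthogonal_matrix Q"
  shows "(\<Sum>k\<in>UNIV. Q$i$k *\<^sub>R (\<Sum>j\<in>UNIV. Q$j$k *\<^sub>R u j)) = u i"
proof -
  have "(\<Sum>k\<in>UNIV. Q$i$k *\<^sub>R (\<Sum>j\<in>UNIV. Q$j$k *\<^sub>R u j)) = (\<Sum>j\<in>UNIV. (\<Sum>k\<in>UNIV. Q$i$k * Q$j$k) *\<^sub>R u j)"
    by (simp add: scaleR_sum_right scaleR_sum_left) (rule sum.swap)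
  also have "\<dots> = u i"
    by (simp add: orthogonal_matrix_sum_products(1)[OF assms] if_distrib[of "\<lambda>c. c *\<^sub>R _"] cong: if_cong)
  finally show ?thesis .
qed

lemma mix_spectral_decomposition:
  fixes u :: "'n::finite \<Rightarrow> 'v::real_vector"
  assumes dec: "\<And>i j. A$i$j = (\<Sum>k\<in>UNIV. Q$i$k * l k * Q$j$k)"
  shows "mix A u i = (\<Sum>k\<in>UNIV. Q$i$k *\<^sub>R (l k *\<^sub>R (\<Sum>j\<in>UNIV. Q$j$k *\<^sub>R u j)))"
  unfolding mix_def dec by (simp add: scaleR_sum_right scaleR_sum_left mult_ac) (rule sum.swap)

lemma spectral_coordinates:
  fixes Q :: "real^'n^'n" and u :: "'n \<Rightarrow> 'v::real_inner"
  assumes orth: "orthogonal_matrix Q" and dec: "\<And>i j. A$i$j = (\<Sum>k\<in>UNIV. Q$i$k * l k * Q$j$k)"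
  defines "c \<equiv> \<lambda>k. \<Sum>i\<in>UNIV. Q$i$k *\<^sub>R u i"
  shows "(\<Sum>i\<in>UNIV. (norm (u i))\<^sup>2) = (\<Sum>k\<in>UNIV. (norm (c k))\<^sup>2)"
    and "(\<Sum>i\<in>UNIV. u i \<bullet> (u i - mix A u i)) = (\<Sum>k\<in>UNIV. (1 - l k) * (norm (c k))\<^sup>2)"
    and "(\<Sum>i\<in>UNIV. (norm (u i - mix A u i))\<^sup>2) = (\<Sum>k\<in>UNIV. (1 - l k)\<^sup>2 * (norm (c k))\<^sup>2)"
proof -
  have u: "u i = (\<Sum>k\<in>UNIV. Q$i$k *\<^sub>R c k)" for i
    unfolding c_def by (rule orthogonal_matrix_expansion[OF orth, symmetric])
  have mix: "mix A u i = (\<Sum>k\<in>UNIV. Q$i$k *\<^sub>R (l k *\<^sub>R c k))" for i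
    unfolding c_def by (rule mix_spectral_decomposition[OF dec])
  have residual: "u i - mix A u i = (\<Sum>k\<in>UNIV. Q$i$k *\<^sub>R ((1 - l k) *\<^sub>R c k))" for i
    unfolding mix by (subst (1) u) (simp add: scaleR_diff_left scaleR_diff_right sum_subtractf)
  show "(\<Sum>i\<in>UNIV. (norm (u i))\<^sup>2) = (\<Sum>k\<in>UNIV. (norm (c k))\<^sup>2)"
    by (simp only: power2_norm_eq_inner u orthogonal_matrix_inner_sum[OF orth])
  show "(\<Sum>i\<in>UNIV. u i \<bullet> (u i - mix A u i)) = (\<Sum>k\<in>UNIV. (1 - l k) * (norm (c k))\<^sup>2)"
    by (simp only: residual, subst (1) u, simp only: orthogonal_matrix_inner_sum[OF orth])
      (simp add: power2_norm_eq_inner)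
  show "(\<Sum>i\<in>UNIV. (norm (u i - mix A u i))\<^sup>2) = (\<Sum>k\<in>UNIV. (1 - l k)\<^sup>2 * (norm (c k))\<^sup>2)"
    by (simp only: power2_norm_eq_inner residual orthogonal_matrix_inner_sum[OF orth])
      (simp add: power2_eq_square mult.assoc)
qed

lemma symmetric_stochastic_spectral_decomposition:
  fixes A :: "real^'n^'n"
  assumes A: "symmetric_stochastic A"
  obtains Q l k0 where "orthogonal_matrix Q" "\<And>i j. A$i$j = (\<Sum>k\<in>UNIV. Q$i$k * l k * Q$j$k)"
    "\<And>i. Q$i$k0 = 1 / sqrt CARD('n)" "l k0 = 1" "\<And>k. l k \<le> 1"
proof -
  define e0 :: "real^'n" where "e0 = (\<chi> i. 1 / sqrt CARD('n))"
  have "norm e0 = 1"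
    by (simp add: e0_def norm_eq_sqrt_inner inner_vec_def)
  moreover have "A *v e0 = 1 *\<^sub>R e0"
    using A by (simp add: vec_eq_iff e0_def matrix_vector_mult_def symmetric_stochastic_def
        flip: sum_divide_distrib)
  ultimately obtain Q l k0 where orth: "orthogonal_matrix Q"
    and dec: "\<And>i j. A$i$j = (\<Sum>k\<in>UNIV. Q$i$k * l k * Q$j$k)"
    and col: "column k0 Q = e0" and lk0: "l k0 = 1"
    using symmetric_matrix_spectral_decomposition[of A e0 1] A
    unfolding symmetric_stochastic_def by blast
  have le1: "l k \<le> 1" for k
  proof -
    \<comment> \<open>\<open>1 - l k\<close> is twice the consensus value of the unit eigenvector \<open>\<lambda>j. Q$j$k\<close>.\<close>
    have "(\<Sum>i\<in>UNIV. Q$i$m *\<^sub>R Q$i$k) = (if m = k then 1 else 0)" for m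
      using orthogonal_matrix_sum_products(2)[OF orth] by simp
    then have "(\<Sum>i\<in>UNIV. Q$i$k * (Q$i$k - mix A (\<lambda>j. Q$j$k) i)) = 1 - l k"
      using spectral_coordinates(2)[OF orth dec, of "\<lambda>j. Q$j$k"]
      by (simp add: if_distrib[of "\<lambda>c. _ * c\<^sup>2"] cong: if_cong)
    moreover have "0 \<le> (\<Sum>i\<in>UNIV. Q$i$k * (Q$i$k - mix A (\<lambda>j. Q$j$k) i))"
      using consensus_eq_inner[OF A, of "\<lambda>j. Q$j$k"] consensus_nonneg[OF A, of "\<lambda>j. Q$j$k"]
      unfolding inner_real_def by linarith
    ultimately show ?thesis by simp
  qed
  have Qk0: "Q$i$k0 = 1 / sqrt CARD('n)" for i
    using col by (simp add: column_def e0_def vec_eq_iff)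
  show thesis using Qk0 lk0 le1 by (rule that[OF orth dec])
qed

lemma consensus_ge_spectral_gap:
  fixes u :: "'n::finite \<Rightarrow> 'v::real_inner"
  assumes A: "symmetric_stochastic A" and mean: "(\<Sum>i\<in>UNIV. u i) = 0"
  shows "(1 - eigval A 2) * (\<Sum>i\<in>UNIV. (norm (u i))\<^sup>2) \<le> 2 * consensus A u"
proof -
  obtain Q l k0 where orth: "orthogonal_matrix Q" and dec: "\<And>i j. A$i$j = (\<Sum>k\<in>UNIV. Q$i$k * l k * Q$j$k)"
    and Qk0: "\<And>i. Q$i$k0 = 1 / sqrt CARD('n)" and lk0: "l k0 = 1" and le1: "\<And>k. l k \<le> 1"
    using symmetric_stochastic_spectral_decomposition[OF A] by blast
  define c where "c k = (\<Sum>i\<in>UNIV. Q$i$k *\<^sub>R u i)" for k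
  have "c k0 = 0"
    using mean by (simp add: c_def Qk0 flip: scaleR_sum_right)
  have "(1 - eigval A 2) * (norm (c k))\<^sup>2 \<le> (1 - l k) * (norm (c k))\<^sup>2" for k
  proof (cases "k = k0")
    case False
    then have "l k \<le> eigval A 2"
      using eigval_2_ge_spectral[OF charpoly_spectral_decomposition[OF orth dec]] le1 lk0 by metis
    then show ?thesis by (intro mult_right_mono) auto
  qed (simp add: \<open>c k0 = 0\<close>)
  then have "(1 - eigval A 2) * (\<Sum>k\<in>UNIV. (norm (c k))\<^sup>2) \<le> (\<Sum>k\<in>UNIV. (1 - l k) * (norm (c k))\<^sup>2)"
    by (simp add: sum_distrib_left sum_mono)
  then show ?thesis
    using spectral_coordinates(1,2)[OF orth dec, of u] consensus_eq_inner[OF A, of u]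
    unfolding c_def by simp
qed

lemma norm_consensus_residual_le:
  fixes u :: "'n::finite \<Rightarrow> 'v::real_inner"
  assumes A: "symmetric_stochastic A"
  shows "(\<Sum>i\<in>UNIV. (norm (u i - mix A u i))\<^sup>2) \<le> (1 - eigval_min A) * (2 * consensus A u)"
proof -
  obtain Q l where orth: "orthogonal_matrix Q" and dec: "\<And>i j. A$i$j = (\<Sum>k\<in>UNIV. Q$i$k * l k * Q$j$k)"
    and le1: "\<And>k. l k \<le> 1"
    using symmetric_stochastic_spectral_decomposition[OF A] by metis
  define c where "c k = (\<Sum>i\<in>UNIV. Q$i$k *\<^sub>R u i)" for k
  have "(1 - l k)\<^sup>2 * (norm (c k))\<^sup>2 \<le> (1 - eigval_min A) * ((1 - l k) * (norm (c k))\<^sup>2)" for k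
  proof -
    have "1 - l k \<le> 1 - eigval_min A"
      using eigval_min_le_spectral[OF charpoly_spectral_decomposition[OF orth dec]] by simp
    then have "(1 - l k) * (1 - l k) \<le> (1 - eigval_min A) * (1 - l k)"
      using le1[of k] by (intro mult_right_mono) auto
    from mult_right_mono[OF this zero_le_power2[of "norm (c k)"]] show ?thesis
      by (simp add: power2_eq_square mult.assoc)
  qed
  then have "(\<Sum>k\<in>UNIV. (1 - l k)\<^sup>2 * (norm (c k))\<^sup>2) \<le> (1 - eigval_min A) * (\<Sum>k\<in>UNIV. (1 - l k) * (norm (c k))\<^sup>2)"
    by (simp add: sum_distrib_left sum_mono)
  then show ?thesis
    using spectral_coordinates(2,3)[OF orth dec, of u] consensus_eq_inner[OF A, of u]
    unfolding c_def by simp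
qed

section \<open>Matrix calculus on the Stiefel manifold\<close>

lemma transpose_add: "transpose (A + B :: real^'n^'m) = transpose A + transpose B"
  by (simp add: vec_eq_iff transpose_def)

lemma transpose_diff: "transpose (A - B :: real^'n^'m) = transpose A - transpose B"
  by (simp add: vec_eq_iff transpose_def)

lemma transpose_sum: "transpose (\<Sum>i\<in>I. B i :: real^'n^'m) = (\<Sum>i\<in>I. transpose (B i))"
  by (induction I rule: infinite_finite_induct) (auto simp: transpose_add vec_eq_iff transpose_def)

lemma matrix_diff_ldistrib: "(A :: real^'n^'m) ** (B - C) = A ** B - A ** C"
  by (simp add: vec_eq_iff matrix_matrix_mult_def sum_subtractf algebra_simps)

lemma matrix_add_rdistrib: "(B + C :: real^'n^'m) ** A = B ** A + C ** A"
  by (simp add: vec_eq_iff matrix_matrix_mult_def sum.distrib algebra_simps)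

lemma matrix_diff_rdistrib: "(B - C :: real^'n^'m) ** A = B ** A - C ** A"
  by (simp add: vec_eq_iff matrix_matrix_mult_def sum_subtractf algebra_simps)

lemma matrix_sum_ldistrib: "(A :: real^'n^'m) ** (\<Sum>i\<in>I. B i) = (\<Sum>i\<in>I. A ** B i)"
  by (induction I rule: infinite_finite_induct) (auto simp: matrix_add_ldistrib)

lemma matrix_sum_rdistrib: "(\<Sum>i\<in>I. B i) ** (A :: real^'n^'m) = (\<Sum>i\<in>I. B i ** A)"
  by (induction I rule: infinite_finite_induct) (auto simp: matrix_add_rdistrib)

lemma inner_matrix_mult_left:
  fixes X :: "real^'c^'a" and Y :: "real^'b^'a" and Z :: "real^'c^'b"
  shows "X \<bullet> (Y ** Z) = (transpose Y ** X) \<bullet> Z"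
proof -
  have "X \<bullet> (Y ** Z) = (\<Sum>a\<in>UNIV. \<Sum>c\<in>UNIV. \<Sum>b\<in>UNIV. Y$a$b * X$a$c * Z$b$c)"
    by (simp add: inner_vec_def matrix_matrix_mult_def sum_distrib_left mult_ac)
  also have "\<dots> = (\<Sum>b\<in>UNIV. \<Sum>c\<in>UNIV. \<Sum>a\<in>UNIV. Y$a$b * X$a$c * Z$b$c)"
    by (subst sum.swap, subst (1 2) sum.swap) (rule refl)
  also have "\<dots> = (transpose Y ** X) \<bullet> Z"
    by (simp add: inner_vec_def matrix_matrix_mult_def transpose_def sum_distrib_right)
  finally show ?thesis .
qed

lemma inner_transpose: "transpose (X :: real^'c^'r) \<bullet> transpose Y = X \<bullet> Y"
  by (simp add: inner_vec_def transpose_def) (rule sum.swap)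

lemma norm_transpose: "norm (transpose (X :: real^'c^'r)) = norm X"
  by (simp add: norm_eq_sqrt_inner inner_transpose)

lemma inner_symmetric_half:
  assumes "transpose K = K"
  shows "M \<bullet> (K :: real^'c^'c) = (1/2) * ((M + transpose M) \<bullet> K)"
  using inner_transpose[of M K] assms by (simp add: inner_add_left)

lemma norm_matrix_sq_rows: "(norm (X :: real^'c^'r))\<^sup>2 = (\<Sum>a\<in>UNIV. (norm (X$a))\<^sup>2)"
  by (simp add: power2_norm_eq_inner inner_vec_def)

lemma norm_matrix_mult_le: "norm ((X :: real^'b^'a) ** (Y :: real^'c^'b)) \<le> norm X * norm Y"
proof -
  have entry: "(X ** Y)$a$c = X$a \<bullet> transpose Y $ c" for a c
    by (simp add: matrix_matrix_mult_def transpose_def inner_vec_def)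
  have "(norm (X ** Y))\<^sup>2 = (\<Sum>a\<in>UNIV. \<Sum>c\<in>UNIV. (X$a \<bullet> transpose Y $ c)\<^sup>2)"
    unfolding power2_norm_eq_inner by (simp add: inner_vec_def entry power2_eq_square)
  also have "\<dots> \<le> (\<Sum>a\<in>UNIV. \<Sum>c\<in>UNIV. (norm (X$a))\<^sup>2 * (norm (transpose Y $ c))\<^sup>2)"
    by (intro sum_mono) (metis Cauchy_Schwarz_ineq power_mult_distrib power2_norm_eq_inner)
  also have "\<dots> = (\<Sum>a\<in>UNIV. (norm (X$a))\<^sup>2) * (\<Sum>c\<in>UNIV. (norm (transpose Y $ c))\<^sup>2)"
    by (rule sum_product[symmetric])
  also have "\<dots> = (norm X)\<^sup>2 * (norm (transpose Y))\<^sup>2"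
    by (simp only: norm_matrix_sq_rows)
  finally have "(norm (X ** Y))\<^sup>2 \<le> (norm X * norm Y)\<^sup>2"
    by (simp add: norm_transpose power_mult_distrib)
  then show ?thesis by (rule power2_le_imp_le) simp
qed

lemma stiefel_mult_left_cancel: "x \<in> stiefel \<Longrightarrow> transpose x ** (x ** K) = K"
  by (simp add: stiefel_def matrix_mul_assoc)

lemma norm_stiefel_mult: "x \<in> stiefel \<Longrightarrow> norm (x ** K) = norm K"
  by (simp add: norm_eq_sqrt_inner inner_matrix_mult_left stiefel_mult_left_cancel)

lemma inner_stiefel_self:
  assumes "y \<in> stiefel"
  shows "y \<bullet> (y :: real^'r^'d) = real CARD('r)"
proof -
  have "y \<bullet> y = (transpose y ** y) \<bullet> mat 1"
    using inner_matrix_mult_left[of y y "mat 1"] by simp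
  also have "\<dots> = mat 1 \<bullet> (mat 1 :: real^'r^'r)"
    using assms by (simp add: stiefel_def)
  also have "\<dots> = real CARD('r)"
    by (simp add: inner_vec_def mat_def if_distrib[of "\<lambda>c. c * _"] cong: if_cong)
  finally show ?thesis .
qed

lemma stiefel_diff_gram:
  "x \<in> stiefel \<Longrightarrow> y \<in> stiefel \<Longrightarrow>
     transpose x ** (x - y) + transpose (x - y) ** x = transpose (x - y) ** (x - y)"
  by (simp add: stiefel_def matrix_diff_ldistrib matrix_diff_rdistrib transpose_diff algebra_simps)

lemma tangent_add: "a \<in> tangent x \<Longrightarrow> b \<in> tangent x \<Longrightarrow> a + b \<in> tangent x"
  by (simp add: tangent_def matrix_add_ldistrib matrix_add_rdistrib transpose_add algebra_simps)

lemma tangent_scaleR: "a \<in> tangent x \<Longrightarrow> c *\<^sub>R a \<in> tangent x"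
  by (simp add: tangent_def matrix_scalar_ac transpose_scalar flip: scalar_matrix_assoc scaleR_add_right)

lemma tangent_inner_symmetric:
  assumes "\<xi> \<in> tangent x" and "transpose K = K"
  shows "\<xi> \<bullet> (x ** K) = 0"
proof -
  have "\<xi> \<bullet> (x ** K) = (1/2) * ((transpose x ** \<xi> + transpose (transpose x ** \<xi>)) \<bullet> K)"
    unfolding inner_matrix_mult_left by (rule inner_symmetric_half[OF assms(2)])
  also have "transpose x ** \<xi> + transpose (transpose x ** \<xi>) = 0"
    using assms(1) by (simp add: tangent_def matrix_transpose_mul)
  finally show ?thesis by simp
qed

lemma proj_tangent_in_tangent:
  assumes x: "x \<in> stiefel"
  shows "proj_tangent x y \<in> tangent x"
proof -
  define S where "S = transpose x ** y + transpose y ** x"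
  have S: "transpose S = S" by (simp add: S_def transpose_add matrix_transpose_mul)
  have P: "proj_tangent x y = y - (1/2) *\<^sub>R (x ** S)" unfolding proj_tangent_def S_def ..
  have "transpose x ** proj_tangent x y = transpose x ** y - (1/2) *\<^sub>R S"
    unfolding P
    by (simp add: matrix_diff_ldistrib matrix_scalar_ac stiefel_mult_left_cancel[OF x]
        flip: scalar_matrix_assoc)
  moreover have "transpose (proj_tangent x y) ** x = transpose y ** x - (1/2) *\<^sub>R S"
    using x unfolding P
    by (simp add: transpose_diff transpose_scalar matrix_transpose_mul matrix_diff_rdistrib S
        stiefel_def flip: scalar_matrix_assoc matrix_mul_assoc)
  ultimately have "transpose x ** proj_tangent x y + transpose (proj_tangent x y) ** x
      = (transpose x ** y - (1/2) *\<^sub>R S) + (transpose y ** x - (1/2) *\<^sub>R S)"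
    by simp
  also have "\<dots> = S - (1/2 + 1/2) *\<^sub>R S"
    unfolding S_def by (simp add: scaleR_add_left algebra_simps)
  finally show ?thesis by (simp add: tangent_def)
qed

lemma norm_proj_tangent_le:
  assumes x: "x \<in> stiefel"
  shows "norm (proj_tangent x e) \<le> norm e"
proof -
  define S where "S = transpose x ** e + transpose e ** x"
  have "transpose S = S" by (simp add: S_def transpose_add matrix_transpose_mul)
  have "e \<bullet> (x ** S) = (transpose x ** e) \<bullet> S" by (rule inner_matrix_mult_left)
  also have "\<dots> = (1/2) * (S \<bullet> S)"
    unfolding inner_symmetric_half[OF \<open>transpose S = S\<close>, of "transpose x ** e"]
    by (simp add: S_def matrix_transpose_mul)
  finally have eS: "e \<bullet> (x ** S) = (1/2) * (S \<bullet> S)" .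
  have "(norm (proj_tangent x e))\<^sup>2 = e \<bullet> e - e \<bullet> (x ** S) + (1/4) * ((x ** S) \<bullet> (x ** S))"
    unfolding proj_tangent_def S_def[symmetric] power2_norm_eq_inner
    by (simp add: inner_diff_left inner_diff_right inner_commute)
  also have "\<dots> = (norm e)\<^sup>2 - (1/4) * (S \<bullet> S)"
    using eS norm_stiefel_mult[OF x, of S] by (simp add: norm_eq_sqrt_inner power2_norm_eq_inner)
  finally show ?thesis
    by (simp add: power2_le_imp_le)
qed

lemma inner_gram_le: "(transpose (w :: real^'r^'d) ** w) \<bullet> (transpose z ** z) \<le> (norm w)\<^sup>2 * (norm z)\<^sup>2"
proof -
  have "(transpose w ** w) \<bullet> (transpose z ** z) \<le> norm (transpose w ** w) * norm (transpose z ** z)"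
    by (rule norm_cauchy_schwarz)
  also have "\<dots> \<le> (norm w)\<^sup>2 * (norm z)\<^sup>2"
    using norm_matrix_mult_le[of "transpose w" w] norm_matrix_mult_le[of "transpose z" z]
    by (intro mult_mono) (auto simp: norm_transpose power2_eq_square)
  finally show ?thesis .
qed

lemma stiefel_inner_normal:
  assumes y: "y \<in> stiefel" and w: "w \<in> stiefel" and K: "transpose K = K"
  shows "(y ** K) \<bullet> (y - w) = (1/2) * ((transpose (y - w) ** (y - w)) \<bullet> K)"
proof -
  have "(y ** K) \<bullet> (y - w) = (transpose y ** (y - w)) \<bullet> K"
    by (simp add: inner_commute inner_matrix_mult_left)
  also have "\<dots> = (1/2) * ((transpose y ** (y - w) + transpose (transpose y ** (y - w))) \<bullet> K)"
    by (rule inner_symmetric_half[OF K])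
  also have "transpose y ** (y - w) + transpose (transpose y ** (y - w)) = transpose (y - w) ** (y - w)"
    using stiefel_diff_gram[OF y w] by (simp add: matrix_transpose_mul)
  finally show ?thesis .
qed

lemma inner_proj_tangent_ge:
  fixes x :: "'n::finite \<Rightarrow> real^'r^'d"
  assumes y: "y \<in> stiefel" and z: "z \<in> stiefel" and xSt: "\<And>j. x j \<in> stiefel"
    and a: "\<And>j. 0 \<le> a j"
  defines "e \<equiv> \<Sum>j\<in>UNIV. a j *\<^sub>R (y - x j)"
  shows "(y - z) \<bullet> e - (norm (y - z))\<^sup>2 / 4 * (\<Sum>j\<in>UNIV. a j * (norm (y - x j))\<^sup>2)
    \<le> (y - z) \<bullet> proj_tangent y e"
proof -
  define K where "K = transpose (y - z) ** (y - z)"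
  define S where "S = transpose y ** e + transpose e ** y"
  have K: "transpose K = K" by (simp add: K_def matrix_transpose_mul)
  have S: "transpose S = S" by (simp add: S_def transpose_add matrix_transpose_mul)
  have P: "(y - z) \<bullet> proj_tangent y e = (y - z) \<bullet> e - (1/2) * ((y - z) \<bullet> (y ** S))"
    unfolding proj_tangent_def S_def[symmetric] by (simp add: inner_diff_right)
  have yS: "(y - z) \<bullet> (y ** S) = (1/2) * (K \<bullet> S)"
    using stiefel_inner_normal[OF y z S] unfolding K_def by (simp add: inner_commute)
  have "K \<bullet> (transpose e ** y) = K \<bullet> (transpose y ** e)"
    using inner_transpose[of K "transpose e ** y"] by (simp add: K matrix_transpose_mul)
  then have KS: "K \<bullet> S = 2 * ((y ** K) \<bullet> e)"
    using inner_matrix_mult_left[of K "transpose y" e] by (simp add: S_def inner_add_right)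
  have yK: "(y ** K) \<bullet> e = (1/2) * (\<Sum>j\<in>UNIV. a j * ((transpose (y - x j) ** (y - x j)) \<bullet> K))"
    by (simp add: e_def inner_sum_right stiefel_inner_normal[OF y xSt K] sum_distrib_left mult_ac)
  have "a j * ((transpose (y - x j) ** (y - x j)) \<bullet> K) \<le> (norm (y - z))\<^sup>2 * (a j * (norm (y - x j))\<^sup>2)"
    for j using mult_left_mono[OF inner_gram_le[of "y - x j" "y - z"] a[of j]]
    by (simp add: K_def mult_ac)
  then have "(\<Sum>j\<in>UNIV. a j * ((transpose (y - x j) ** (y - x j)) \<bullet> K))
      \<le> (norm (y - z))\<^sup>2 * (\<Sum>j\<in>UNIV. a j * (norm (y - x j))\<^sup>2)"
    by (simp add: sum_distrib_left sum_mono)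
  then show ?thesis
    by (simp only: P yS KS yK)
qed

section \<open>The induced arithmetic mean\<close>

lemma IAM_minimal:
  assumes "is_IAM x xb" and "y \<in> stiefel"
  shows "(\<Sum>i\<in>UNIV. (norm (x i - xb))\<^sup>2) \<le> (\<Sum>i\<in>UNIV. (norm (x i - y))\<^sup>2)"
  using assms unfolding is_IAM_def by (simp add: norm_minus_commute)

lemma IAM_first_order_condition:
  fixes x :: "'n::finite \<Rightarrow> real^'r^'d" and R :: "real^'r^'d \<Rightarrow> real^'r^'d \<Rightarrow> real^'r^'d"
  assumes retr: "is_retraction R" and iam: "is_IAM x xb" and \<xi>: "\<xi> \<in> tangent xb"
  shows "\<xi> \<bullet> (\<Sum>i\<in>UNIV. x i - xb) = 0"
proof -
  have xb: "xb \<in> stiefel" using iam by (simp add: is_IAM_def)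
  define X where "X = (\<Sum>i\<in>UNIV. x i)"
  \<comment> \<open>A curve in the Stiefel manifold through \<open>xb\<close> with velocity \<open>\<xi>\<close>; along it
    \<open>\<Sum>i. (norm (\<gamma> s - x i))\<^sup>2\<close> is a decreasing affine function of \<open>\<gamma> s \<bullet> X\<close>
    and minimal at \<open>s = 0\<close>.\<close>
  define \<gamma> where "\<gamma> s = R xb (s *\<^sub>R \<xi>)" for s
  have \<gamma>: "\<gamma> s \<in> stiefel" for s
    using retr xb tangent_scaleR[OF \<xi>] unfolding is_retraction_def \<gamma>_def by blast
  have "\<gamma> 0 = xb" using retr xb unfolding is_retraction_def \<gamma>_def by simp
  have "(\<gamma> has_vector_derivative \<xi>) (at 0)"
    using retr xb \<xi> unfolding is_retraction_def \<gamma>_def by blast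
  then have "((\<lambda>s. \<gamma> s \<bullet> X) has_derivative (\<lambda>h. (h *\<^sub>R \<xi>) \<bullet> X)) (at 0)"
    unfolding has_vector_derivative_def by (rule has_derivative_inner_left)
  moreover have "(\<lambda>h. (h *\<^sub>R \<xi>) \<bullet> X) = (*) (\<xi> \<bullet> X)" by (auto simp: mult.commute)
  ultimately have "((\<lambda>s. \<gamma> s \<bullet> X) has_real_derivative \<xi> \<bullet> X) (at 0)"
    by (simp add: has_field_derivative_def)
  moreover have "\<gamma> s \<bullet> X \<le> \<gamma> 0 \<bullet> X" for s
  proof -
    have dist: "(\<Sum>i\<in>UNIV. (norm (x i - y))\<^sup>2)
        = real CARD('n) * CARD('r) - 2 * (y \<bullet> X) + (\<Sum>i\<in>UNIV. (norm (x i))\<^sup>2)" if "y \<in> stiefel" for y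
      using inner_stiefel_self[OF that]
      by (simp add: X_def power2_norm_eq_inner inner_diff_left inner_diff_right inner_commute
          sum.distrib sum_subtractf inner_sum_right sum_distrib_left)
    show ?thesis
      using IAM_minimal[OF iam \<gamma>[of s]] dist[OF \<gamma>] dist[OF xb] \<open>\<gamma> 0 = xb\<close> by simp
  qed
  ultimately have "\<xi> \<bullet> X = 0"
    by (intro DERIV_local_max[of _ _ 0 1]) auto
  moreover have "\<xi> \<bullet> xb = 0"
    using tangent_inner_symmetric[OF \<xi>, of "mat 1"] by simp
  ultimately show ?thesis
    by (simp add: X_def inner_sum_right inner_diff_right)
qed

lemma norm_sum_IAM_deviation_le:
  fixes x :: "'n::finite \<Rightarrow> real^'r^'d" and R :: "real^'r^'d \<Rightarrow> real^'r^'d \<Rightarrow> real^'r^'d"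
  assumes retr: "is_retraction R" and xSt: "\<And>i. x i \<in> stiefel" and iam: "is_IAM x xb"
  shows "norm (\<Sum>i\<in>UNIV. x i - xb) \<le> (1/2) * (\<Sum>i\<in>UNIV. (norm (x i - xb))\<^sup>2)"
proof -
  have xb: "xb \<in> stiefel" using iam by (simp add: is_IAM_def)
  define s where "s = (\<Sum>i\<in>UNIV. x i - xb)"
  define S where "S = transpose xb ** s + transpose s ** xb"
  have "transpose S = S" by (simp add: S_def transpose_add matrix_transpose_mul)
  \<comment> \<open>The first-order condition kills the tangential part of \<open>s\<close>, leaving \<open>s = (1/2) *\<^sub>R (xb ** S)\<close>.\<close>
  define P where "P = proj_tangent xb s"
  have P: "P \<in> tangent xb" unfolding P_def by (rule proj_tangent_in_tangent[OF xb])
  have "P \<bullet> P = P \<bullet> s - (1/2) * (P \<bullet> (xb ** S))"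
    by (subst (2) P_def) (simp add: proj_tangent_def S_def inner_diff_right)
  also have "\<dots> = 0"
    using IAM_first_order_condition[OF retr iam P] tangent_inner_symmetric[OF P \<open>transpose S = S\<close>]
    by (simp add: s_def)
  finally have "s = (1/2) *\<^sub>R (xb ** S)"
    by (simp add: P_def proj_tangent_def S_def)
  then have "norm s = (1/2) * norm S"
    by (simp add: norm_stiefel_mult[OF xb])
  also have "S = - (\<Sum>i\<in>UNIV. transpose (x i - xb) ** (x i - xb))"
  proof -
    have "transpose xb ** (x i - xb) + transpose (x i - xb) ** xb = - (transpose (x i - xb) ** (x i - xb))" for i
      using stiefel_diff_gram[OF xb xSt, of i]
      by (simp add: matrix_diff_ldistrib matrix_diff_rdistrib transpose_diff algebra_simps)
    then show ?thesis
      by (simp add: S_def s_def matrix_sum_ldistrib matrix_sum_rdistrib transpose_sum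
          sum_negf flip: sum.distrib)
  qed
  also have "norm (- (\<Sum>i\<in>UNIV. transpose (x i - xb) ** (x i - xb))) \<le> (\<Sum>i\<in>UNIV. (norm (x i - xb))\<^sup>2)"
    unfolding norm_minus_cancel
    by (rule order.trans[OF norm_sum sum_mono])
      (metis norm_matrix_mult_le norm_transpose power2_eq_square)
  finally show ?thesis by (simp add: s_def)
qed

section \<open>One step of the perturbed consensus iteration\<close>

lemma sum_norm_sq_sub_mean:
  fixes z :: "'n::finite \<Rightarrow> 'v::real_inner"
  defines "m \<equiv> (1 / real CARD('n)) *\<^sub>R (\<Sum>i\<in>UNIV. z i)"
  shows "(\<Sum>i\<in>UNIV. z i - m) = 0"
    and "(\<Sum>i\<in>UNIV. (norm (z i - m))\<^sup>2) = (\<Sum>i\<in>UNIV. (norm (z i))\<^sup>2) - (norm (\<Sum>i\<in>UNIV. z i))\<^sup>2 / CARD('n)"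
proof -
  define n where "n = real CARD('n)"
  have n: "n > 0" by (simp add: n_def)
  have sum: "(\<Sum>i\<in>UNIV. z i) = n *\<^sub>R m" using n by (simp add: m_def n_def)
  show "(\<Sum>i\<in>UNIV. z i - m) = 0"
    by (simp add: sum_subtractf sum n_def sum_constant_scaleR del: sum_constant)
  have "(norm (z i - m))\<^sup>2 = (norm (z i))\<^sup>2 - 2 * (m \<bullet> z i) + m \<bullet> m" for i
    unfolding power2_norm_eq_inner by (simp add: inner_diff_left inner_diff_right inner_commute)
  moreover have "(\<Sum>i\<in>UNIV. m \<bullet> z i) = n * (m \<bullet> m)"
    by (simp add: sum flip: inner_sum_right)
  moreover have "(norm (\<Sum>i\<in>UNIV. z i))\<^sup>2 / n = n * (m \<bullet> m)"
    using n by (simp add: sum dot_square_norm power_mult_distrib power2_eq_square)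
  ultimately show "(\<Sum>i\<in>UNIV. (norm (z i - m))\<^sup>2) = (\<Sum>i\<in>UNIV. (norm (z i))\<^sup>2) - (norm (\<Sum>i\<in>UNIV. z i))\<^sup>2 / CARD('n)"
    by (simp add: n_def sum.distrib sum_subtractf flip: sum_distrib_left)
qed

lemma consensus_ge_near_IAM:
  fixes x :: "'n::finite \<Rightarrow> real^'r^'d" and R :: "real^'r^'d \<Rightarrow> real^'r^'d \<Rightarrow> real^'r^'d"
  assumes A: "symmetric_stochastic A" and retr: "is_retraction R"
    and xSt: "\<And>i. x i \<in> stiefel" and iam: "is_IAM x xb"
    and N1: "(\<Sum>i\<in>UNIV. (norm (x i - xb))\<^sup>2) \<le> real CARD('n) * \<delta>\<^sup>2"
    and c: "0 \<le> c" "c \<le> 1 - \<delta>\<^sup>2 / 4"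
  shows "c * (1 - eigval A 2) * (\<Sum>i\<in>UNIV. (norm (x i - xb))\<^sup>2) \<le> 2 * consensus A x"
proof -
  define n where "n = real CARD('n)"
  define Sz where "Sz = (\<Sum>i\<in>UNIV. (norm (x i - xb))\<^sup>2)"
  define m where "m = (1 / n) *\<^sub>R (\<Sum>i\<in>UNIV. x i - xb)"
  have n: "n > 0" by (simp add: n_def)
  have "0 \<le> Sz" by (simp add: Sz_def sum_nonneg)
  have "consensus A (\<lambda>i. x i - xb - m) = consensus A x"
    unfolding diff_diff_eq by (rule consensus_translate)
  then have gap: "(1 - eigval A 2) * (\<Sum>i\<in>UNIV. (norm (x i - xb - m))\<^sup>2) \<le> 2 * consensus A x"
    using consensus_ge_spectral_gap[OF A sum_norm_sq_sub_mean(1)[of "\<lambda>i. x i - xb"]]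
    by (simp add: m_def n_def)
  have "(norm (\<Sum>i\<in>UNIV. x i - xb))\<^sup>2 / n \<le> (Sz / 2)\<^sup>2 / n"
    using norm_sum_IAM_deviation_le[OF retr xSt iam] n
    by (intro divide_right_mono power_mono) (auto simp: Sz_def)
  also have "\<dots> = (Sz / 4) * (Sz / n)" by (simp add: power2_eq_square)
  also have "\<dots> \<le> (Sz / 4) * \<delta>\<^sup>2"
    using N1 n \<open>0 \<le> Sz\<close> by (intro mult_left_mono) (auto simp: Sz_def n_def divide_le_eq mult.commute)
  finally have centered: "(1 - \<delta>\<^sup>2 / 4) * Sz \<le> (\<Sum>i\<in>UNIV. (norm (x i - xb - m))\<^sup>2)"
    using sum_norm_sq_sub_mean(2)[of "\<lambda>i. x i - xb"] by (simp add: Sz_def m_def n_def algebra_simps)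
  \<comment> \<open>\<open>eigval A 2\<close> is an unspecified list element when \<open>CARD('n) = 1\<close>, so its sign is unknown.\<close>
  have "c * (1 - eigval A 2) * Sz \<le> 2 * consensus A x"
  proof (cases "0 \<le> 1 - eigval A 2")
    case True
    have "c * (1 - eigval A 2) * Sz \<le> (1 - eigval A 2) * ((1 - \<delta>\<^sup>2 / 4) * Sz)"
      using mult_right_mono[OF c(2), of "(1 - eigval A 2) * Sz"] True \<open>0 \<le> Sz\<close> by (simp add: mult_ac)
    also have "\<dots> \<le> (1 - eigval A 2) * (\<Sum>i\<in>UNIV. (norm (x i - xb - m))\<^sup>2)"
      using True centered by (rule mult_left_mono[rotated])
    finally show ?thesis using gap by linarith
  next
    case False
    then have "c * (1 - eigval A 2) * Sz \<le> 0"
      using c(1) \<open>0 \<le> Sz\<close> by (simp add: mult_nonneg_nonpos mult_nonpos_nonneg)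
    then show ?thesis using consensus_nonneg[OF A, of x] by linarith
  qed
  then show ?thesis by (simp add: Sz_def)
qed

lemma inner_consensus_gradient_ge:
  fixes x :: "'n::finite \<Rightarrow> real^'r^'d"
  assumes A: "symmetric_stochastic A" and xSt: "\<And>i. x i \<in> stiefel" and xb: "xb \<in> stiefel"
    and N2: "\<And>i. norm (x i - xb) \<le> \<delta>"
  shows "(1 - \<delta>\<^sup>2 / 2) * (2 * consensus A x)
    \<le> (\<Sum>i\<in>UNIV. (x i - xb) \<bullet> proj_tangent (x i) (x i - mix A x i))"
proof -
  have nonneg: "\<And>i j. 0 \<le> A$i$j" and rows: "\<And>i. (\<Sum>j\<in>UNIV. A$i$j) = 1"
    using A by (auto simp: symmetric_stochastic_def)
  define D where "D i = (\<Sum>j\<in>UNIV. A$i$j * (norm (x i - x j))\<^sup>2)" for i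
  have "(x i - xb) \<bullet> (x i - mix A x i) - \<delta>\<^sup>2 / 4 * D i
      \<le> (x i - xb) \<bullet> proj_tangent (x i) (x i - mix A x i)" for i
  proof -
    have "(\<Sum>j\<in>UNIV. A$i$j *\<^sub>R (x i - x j)) = (\<Sum>j\<in>UNIV. A$i$j) *\<^sub>R x i - mix A x i"
      unfolding mix_def scaleR_diff_right sum_subtractf scaleR_sum_left ..
    then have residual: "(\<Sum>j\<in>UNIV. A$i$j *\<^sub>R (x i - x j)) = x i - mix A x i"
      by (simp add: rows)
    have "(norm (x i - xb))\<^sup>2 / 4 * D i \<le> \<delta>\<^sup>2 / 4 * D i"
      using N2[of i] by (intro mult_right_mono divide_right_mono power_mono)
        (auto simp: D_def nonneg sum_nonneg)
    moreover have "(x i - xb) \<bullet> (x i - mix A x i) - (norm (x i - xb))\<^sup>2 / 4 * D i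
        \<le> (x i - xb) \<bullet> proj_tangent (x i) (x i - mix A x i)"
      using inner_proj_tangent_ge[where y = "x i" and z = xb and x = x and a = "\<lambda>j. A$i$j"]
        xSt xb nonneg
      unfolding residual D_def by blast
    ultimately show ?thesis by linarith
  qed
  then have "(\<Sum>i\<in>UNIV. (x i - xb) \<bullet> (x i - mix A x i)) - \<delta>\<^sup>2 / 4 * (\<Sum>i\<in>UNIV. D i)
      \<le> (\<Sum>i\<in>UNIV. (x i - xb) \<bullet> proj_tangent (x i) (x i - mix A x i))"
    by (simp add: sum_distrib_left sum_mono flip: sum_subtractf)
  moreover have "(\<Sum>i\<in>UNIV. (x i - xb) \<bullet> (x i - mix A x i)) = 2 * consensus A x"
    using consensus_eq_inner[OF A, of "\<lambda>i. x i - xb"]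
    by (simp add: mix_diff mix_const[OF A] consensus_translate)
  moreover have "(\<Sum>i\<in>UNIV. D i) = 4 * consensus A x"
    by (simp add: D_def consensus_def)
  ultimately show ?thesis by (simp add: algebra_simps)
qed

lemma norm_consensus_gradient_le:
  fixes x :: "'n::finite \<Rightarrow> real^'r^'d"
  assumes A: "symmetric_stochastic A" and xSt: "\<And>i. x i \<in> stiefel"
  shows "(\<Sum>i\<in>UNIV. (norm (proj_tangent (x i) (x i - mix A x i)))\<^sup>2)
    \<le> (1 - eigval_min A) * (2 * consensus A x)"
proof -
  have "(\<Sum>i\<in>UNIV. (norm (proj_tangent (x i) (x i - mix A x i)))\<^sup>2)
      \<le> (\<Sum>i\<in>UNIV. (norm (x i - mix A x i))\<^sup>2)"
    by (intro sum_mono power_mono norm_proj_tangent_le xSt) simp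
  also have "\<dots> \<le> (1 - eigval_min A) * (2 * consensus A x)"
    by (rule norm_consensus_residual_le[OF A])
  finally show ?thesis .
qed

lemma sum_norm_diff_scaleR_sq:
  fixes z g :: "'i \<Rightarrow> 'v::real_inner"
  shows "(\<Sum>i\<in>I. (norm (z i - \<alpha> *\<^sub>R g i))\<^sup>2)
    = (\<Sum>i\<in>I. (norm (z i))\<^sup>2) - 2 * \<alpha> * (\<Sum>i\<in>I. z i \<bullet> g i) + \<alpha>\<^sup>2 * (\<Sum>i\<in>I. (norm (g i))\<^sup>2)"
proof -
  have "(norm (z i - \<alpha> *\<^sub>R g i))\<^sup>2 = (norm (z i))\<^sup>2 - 2 * \<alpha> * (z i \<bullet> g i) + \<alpha>\<^sup>2 * (norm (g i))\<^sup>2" for i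
    unfolding power2_norm_eq_inner
    by (simp add: inner_diff_left inner_diff_right inner_commute power2_eq_square algebra_simps)
  then show ?thesis
    by (simp add: sum.distrib sum_subtractf sum_distrib_left)
qed

lemma step_size_bound:
  fixes \<alpha> L \<kappa> :: real
  assumes "0 < \<alpha>" "0 \<le> \<kappa>" "\<alpha> \<le> \<kappa> / (2 * L)"
  shows "\<alpha> * L \<le> \<kappa> / 2"
proof -
  \<comment> \<open>Since \<open>x / 0 = 0\<close>, the bound on \<open>\<alpha>\<close> also rules out \<open>L \<le> 0\<close>.\<close>
  have "0 < L"
  proof (rule ccontr)
    assume "\<not> 0 < L"
    then have "\<kappa> / (2 * L) \<le> 0"
      using assms(2) by (intro divide_nonneg_nonpos) auto
    then show False using assms(1,3) by simp
  qed
  then show ?thesis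
    using assms(3) by (simp add: pos_le_divide_eq field_simps)
qed

lemma consensus_gradient_step_contraction:
  fixes x :: "'n::finite \<Rightarrow> real^'r^'d"
  assumes A: "symmetric_stochastic A" and xSt: "\<And>i. x i \<in> stiefel" and xb: "xb \<in> stiefel"
    and N2: "\<And>i. norm (x i - xb) \<le> \<delta>" and \<delta>: "\<delta>\<^sup>2 \<le> 2"
    and lower: "c * (1 - eigval A 2) * (\<Sum>i\<in>UNIV. (norm (x i - xb))\<^sup>2) \<le> 2 * consensus A x"
    and \<alpha>: "0 < \<alpha>" "\<alpha> \<le> (2 - \<delta>\<^sup>2) / (2 * (1 - eigval_min A))"
  shows "(\<Sum>i\<in>UNIV. (norm (x i - \<alpha> *\<^sub>R proj_tangent (x i) (x i - mix A x i) - xb))\<^sup>2)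
    \<le> (1 - c * (1 - \<delta>\<^sup>2 / 2) * (1 - eigval A 2) * \<alpha>) * (\<Sum>i\<in>UNIV. (norm (x i - xb))\<^sup>2)"
proof -
  define g where "g i = proj_tangent (x i) (x i - mix A x i)" for i
  define Sz where "Sz = (\<Sum>i\<in>UNIV. (norm (x i - xb))\<^sup>2)"
  define \<Phi> where "\<Phi> = 2 * consensus A x"
  define L where "L = 1 - eigval_min A"
  have "\<alpha> * L \<le> 1 - \<delta>\<^sup>2 / 2"
    using step_size_bound[of \<alpha> "2 - \<delta>\<^sup>2" L] \<alpha> \<delta> by (simp add: L_def)
  have "0 \<le> \<Phi>" by (simp add: \<Phi>_def consensus_nonneg[OF A])
  have inner: "(1 - \<delta>\<^sup>2 / 2) * \<Phi> \<le> (\<Sum>i\<in>UNIV. (x i - xb) \<bullet> g i)"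
    unfolding \<Phi>_def g_def by (rule inner_consensus_gradient_ge[OF A xSt xb N2])
  have grad: "(\<Sum>i\<in>UNIV. (norm (g i))\<^sup>2) \<le> L * \<Phi>"
    unfolding g_def L_def \<Phi>_def by (rule norm_consensus_gradient_le[OF A xSt])
  have "(\<Sum>i\<in>UNIV. (norm (x i - \<alpha> *\<^sub>R g i - xb))\<^sup>2)
      = Sz - 2 * \<alpha> * (\<Sum>i\<in>UNIV. (x i - xb) \<bullet> g i) + \<alpha>\<^sup>2 * (\<Sum>i\<in>UNIV. (norm (g i))\<^sup>2)"
    using sum_norm_diff_scaleR_sq[of "\<lambda>i. x i - xb" \<alpha> g UNIV]
    by (simp add: Sz_def algebra_simps)
  also have "\<dots> \<le> Sz - 2 * (\<alpha> * ((1 - \<delta>\<^sup>2 / 2) * \<Phi>)) + \<alpha> * (\<alpha> * L * \<Phi>)"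
    using inner grad \<alpha>(1) by (intro add_mono diff_mono) (auto simp: power2_eq_square mult_left_mono)
  also have "\<dots> \<le> Sz - \<alpha> * ((1 - \<delta>\<^sup>2 / 2) * \<Phi>)"
  proof -
    have "Sz - 2 * X + Y \<le> Sz - X" if "Y \<le> X" for X Y :: real
      using that by linarith
    moreover have "\<alpha> * (\<alpha> * L * \<Phi>) \<le> \<alpha> * ((1 - \<delta>\<^sup>2 / 2) * \<Phi>)"
      using \<open>\<alpha> * L \<le> 1 - \<delta>\<^sup>2 / 2\<close> \<open>0 \<le> \<Phi>\<close> \<alpha>(1)
      by (intro mult_left_mono mult_right_mono) auto
    ultimately show ?thesis by blast
  qed
  also have "\<dots> \<le> Sz - \<alpha> * ((1 - \<delta>\<^sup>2 / 2) * (c * (1 - eigval A 2) * Sz))"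
    using lower \<alpha>(1) \<delta> unfolding Sz_def \<Phi>_def
    by (intro diff_mono mult_left_mono) auto
  also have "\<dots> = (1 - c * (1 - \<delta>\<^sup>2 / 2) * (1 - eigval A 2) * \<alpha>) * Sz"
    by (simp add: field_simps)
  finally show ?thesis
    unfolding g_def Sz_def .
qed

lemma tnorm_eq_norm:
  fixes f :: "'n::finite \<Rightarrow> real^'r^'d"
  shows "tnorm f = norm (\<chi> i. f i)"
  by (simp add: tnorm_def norm_vec_def L2_set_def)

lemma tnorm_triangle:
  fixes f g :: "'n::finite \<Rightarrow> real^'r^'d"
  shows "tnorm (\<lambda>i. f i + g i) \<le> tnorm f + tnorm g"
  using norm_triangle_ineq[of "\<chi> i. f i" "\<chi> i. g i"]
  by (simp add: tnorm_eq_norm plus_vec_def)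

lemma tnorm_scaleR:
  fixes f :: "'n::finite \<Rightarrow> real^'r^'d"
  shows "0 \<le> c \<Longrightarrow> tnorm (\<lambda>i. c *\<^sub>R f i) = c * tnorm f"
  using norm_scaleR[of c "\<chi> i. f i"] by (simp add: tnorm_eq_norm scaleR_vec_def)

lemma tnorm_mono: "(\<And>i. norm (f i) \<le> norm (g i)) \<Longrightarrow> tnorm f \<le> tnorm g"
  unfolding tnorm_def by (intro real_sqrt_le_mono sum_mono power_mono) auto

lemma neighbourhood_radii_bounds:
  assumes r: "1 \<le> r" and d1: "\<delta>1 \<le> \<delta>2 / (5 * sqrt r)" "0 < \<delta>1" and d2: "0 < \<delta>2" "\<delta>2 \<le> 1/6"
  shows "0 \<le> 1 - 4 * r * \<delta>1\<^sup>2" and "1 - 4 * r * \<delta>1\<^sup>2 \<le> 1 - \<delta>1\<^sup>2 / 4" and "\<delta>2\<^sup>2 \<le> 2"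
proof -
  have "\<delta>1\<^sup>2 \<le> (\<delta>2 / (5 * sqrt r))\<^sup>2" using d1 by (intro power_mono) auto
  also have "\<dots> = \<delta>2\<^sup>2 / (25 * r)" using r by (simp add: power_divide power_mult_distrib)
  finally have "4 * r * \<delta>1\<^sup>2 \<le> 4 * \<delta>2\<^sup>2 / 25" using r by (simp add: field_simps)
  moreover have "\<delta>2\<^sup>2 \<le> (1/6)\<^sup>2" using d2 by (intro power_mono) auto
  ultimately show "0 \<le> 1 - 4 * r * \<delta>1\<^sup>2" "\<delta>2\<^sup>2 \<le> 2" by (simp_all add: power_divide)
  show "1 - 4 * r * \<delta>1\<^sup>2 \<le> 1 - \<delta>1\<^sup>2 / 4"
    using mult_left_mono[of 1 "16 * r" "\<delta>1\<^sup>2"] r by (simp add: algebra_simps)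
qed

lemma retraction_gradient_step_le:
  assumes nonexpansive: "\<And>y z \<xi>. y \<in> stiefel \<Longrightarrow> z \<in> stiefel \<Longrightarrow> \<xi> \<in> tangent y \<Longrightarrow>
      norm (R y \<xi> - z) \<le> norm (y + \<xi> - z)"
    and x: "x \<in> stiefel" and z: "z \<in> stiefel" and v: "v \<in> tangent x"
  shows "norm (R x (- \<alpha> *\<^sub>R proj_tangent x e + \<beta> *\<^sub>R v) - z)
    \<le> norm ((x - \<alpha> *\<^sub>R proj_tangent x e - z) + \<beta> *\<^sub>R v)"
proof -
  have "- \<alpha> *\<^sub>R proj_tangent x e + \<beta> *\<^sub>R v \<in> tangent x"
    using proj_tangent_in_tangent[OF x] v by (intro tangent_add tangent_scaleR)
  from nonexpansive[OF x z this] show ?thesis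
    by (simp add: algebra_simps)
qed

theorem mainTheorem2:
  fixes E :: "'n::finite \<Rightarrow> 'n \<Rightarrow> bool"
    and W :: "real^'n^'n"
    and R :: "real^'r^'d \<Rightarrow> real^'r^'d \<Rightarrow> real^'r^'d"
    and M \<delta>1 \<delta>2 \<alpha> \<beta> :: real
    and t :: nat
    and x x' v :: "'n \<Rightarrow> real^'r^'d"
    and xb xb' :: "real^'r^'d"
  assumes dr: "CARD('r) \<le> CARD('d)"
    and graph: "connected_graph E"
    and mix: "mixing_matrix E W"
    and sig2: "0 < singval W 2" "singval W 2 < 1"
    and retr: "is_retraction R"
    and Mpos: "M > 0"
    and retr1: "\<And>y z \<xi>. y \<in> stiefel \<Longrightarrow> z \<in> stiefel \<Longrightarrow> \<xi> \<in> tangent y \<Longrightarrow>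
                  norm (R y \<xi> - z) \<le> norm (y + \<xi> - z)"
    and retr2: "\<And>y \<xi>. y \<in> stiefel \<Longrightarrow> \<xi> \<in> tangent y \<Longrightarrow>
                  norm (R y \<xi> - (y + \<xi>)) \<le> M * (norm \<xi>)\<^sup>2"
    and d1: "\<delta>1 > 0" "\<delta>1 \<le> \<delta>2 / (5 * sqrt (real CARD('r)))"
    and d2: "\<delta>2 > 0" "\<delta>2 \<le> 1/6"
    and tbound: "int t \<ge> \<lceil>log (singval W 2) (1 / (2 * sqrt (real CARD('n))))\<rceil>"
    and alpha: "0 < \<alpha>" "\<alpha> \<le> (2 - \<delta>2\<^sup>2) / (2 * (1 - eigval_min (matpow W t)))"
               "\<alpha> \<le> 1" "\<alpha> \<le> 1 / M"
    and xSt: "\<And>i. x i \<in> stiefel"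
    and xbIAM: "is_IAM x xb"
    and N1: "(\<Sum>i\<in>UNIV. (norm (x i - xb))\<^sup>2) \<le> real CARD('n) * \<delta>1\<^sup>2"
    and N2: "\<And>i. norm (x i - xb) \<le> \<delta>2"
    and beta: "\<beta> \<ge> 0"
    and vT: "\<And>i. v i \<in> tangent (x i)"
    and upd: "\<And>i. x' i = R (x i) (- \<alpha> *\<^sub>R grad_phi W t x i + \<beta> *\<^sub>R v i)"
    and xb'IAM: "is_IAM x' xb'"
  shows "tnorm (\<lambda>i. x' i - xb') \<le>
           sqrt (1 - (1 - 4 * real CARD('r) * \<delta>1\<^sup>2) * (1 - \<delta>2\<^sup>2 / 2)
                       * (1 - eigval (matpow W t) 2) * \<alpha>) * tnorm (\<lambda>i. x i - xb)
           + \<beta> * tnorm v"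
proof -
  let ?c = "1 - 4 * real CARD('r) * \<delta>1\<^sup>2" and ?g = "\<lambda>i. grad_phi W t x i"
  have A: "symmetric_stochastic (matpow W t)"
    using mix by (intro symmetric_stochastic_matpow mixing_matrix_imp_symmetric_stochastic)
  have xb: "xb \<in> stiefel" using xbIAM by (simp add: is_IAM_def)
  note radii = neighbourhood_radii_bounds[of "real CARD('r)", OF _ d1(2,1) d2]
  have "tnorm (\<lambda>i. x' i - xb') \<le> tnorm (\<lambda>i. x' i - xb)"
    using IAM_minimal[OF xb'IAM xb] by (simp add: tnorm_def)
  also have "\<dots> \<le> tnorm (\<lambda>i. (x i - \<alpha> *\<^sub>R ?g i - xb) + \<beta> *\<^sub>R v i)"
    using retraction_gradient_step_le[OF retr1 xSt xb vT]
    by (intro tnorm_mono) (simp add: upd grad_phi_def)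
  also have "\<dots> \<le> tnorm (\<lambda>i. x i - \<alpha> *\<^sub>R ?g i - xb) + \<beta> * tnorm v"
    using tnorm_triangle[of "\<lambda>i. x i - \<alpha> *\<^sub>R ?g i - xb" "\<lambda>i. \<beta> *\<^sub>R v i"]
      tnorm_scaleR[OF beta, of v]
    by simp
  also have "tnorm (\<lambda>i. x i - \<alpha> *\<^sub>R ?g i - xb)
      \<le> sqrt (1 - ?c * (1 - \<delta>2\<^sup>2 / 2) * (1 - eigval (matpow W t) 2) * \<alpha>) * tnorm (\<lambda>i. x i - xb)"
    using consensus_gradient_step_contraction[OF A xSt xb N2 radii(3)
        consensus_ge_near_IAM[OF A retr xSt xbIAM N1 radii(1,2)] alpha(1,2)]
    by (simp add: tnorm_def grad_phi_eq_mix real_sqrt_le_mono flip: real_sqrt_mult)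
  finally show ?thesis by simp
qed

end
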